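(* Let $\Omega=[0,1]$, let $p_1,\dots,p_n\in(0,1)$ be distinct, and let $F_\infty$ be the pointwise minimal $\Omega$-tropical series that is non-smooth at each of $p_1,\dots,p_n$. Let $q\in[0,1)$ be the fractional part of $-\sum_{j=1}^n p_j$. Let $H_\infty$ be the set of non-smooth points of $F_\infty$ and $\mu_\infty$ their multiplicities. Then: (i) if $q=0$, then $H_\infty=\{p_1,\dots,p_n\}$ and all multiplicities equal $1$; (ii) if $q=p_j$ for some $j\in\{1,\dots,n\}$, then $H_\infty=\{p_1,\dots,p_n\}$, $\mu_\infty(p_j)=2$, and all other multiplicities equal $1$; (iii) otherwise, $H_\infty=\{q,p_1,\dots,p_n\}$ and all multiplicities equal $1$.
   Context: Let $\Omega=[\alpha,\beta]$ be a compact interval. An $\Omega$-tropical series is a function $F:\Omega\to[0,\infty)$ with $F(\alpha)=F(\beta)=0$ that can be written as $F(z)=\inf_{v\in\mathbb{Z}}(a_v+zv)$ for some real numbers $a_v$. Such $F$ is concave piecewise linear with integer slopes; its non-smooth points are the points of $(\alpha,\beta)$ where $F$ is not differentiable, and the multiplicity of such a point $h$ is $F'(h^-)-F'(h^+)\in\mathbb{Z}_{\ge1}$. For points $p_1,\dots,p_n$ in $(\alpha,\beta)$, the pointwise infimum of all $\Omega$-tropical series that are non-smooth at each $p_i$ is itself an $\Omega$-tropical series non-smooth at each $p_i$; it is denoted $F_\infty=G_{\{p_1,\dots,p_n\}}0_\Omega$. *)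

theory Defs
  imports "HOL-Analysis.Analysis"
begin

definition tropical_series :: "real \<Rightarrow> real \<Rightarrow> (real \<Rightarrow> real) \<Rightarrow> bool" where
  "tropical_series \<alpha> \<beta> F \<longleftrightarrow>
     \<alpha> \<le> \<beta> \<and> F \<alpha> = 0 \<and> F \<beta> = 0 \<and> (\<forall>z\<in>{\<alpha>..\<beta>}. F z \<ge> 0) \<and>
     (\<exists>a :: int \<Rightarrow> real. \<forall>z\<in>{\<alpha>..\<beta>}.
        (\<forall>v. F z \<le> a v + z * of_int v) \<and>
        (\<forall>y. (\<forall>v. y \<le> a v + z * of_int v) \<longrightarrow> y \<le> F z))"

definition nonsmooth_points :: "real \<Rightarrow> real \<Rightarrow> (real \<Rightarrow> real) \<Rightarrow> real set" where
  "nonsmooth_points \<alpha> \<beta> F = {h \<in> {\<alpha><..<\<beta>}. \<not> F differentiable (at h)}"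

definition left_deriv :: "(real \<Rightarrow> real) \<Rightarrow> real \<Rightarrow> real" where
  "left_deriv F h = (THE D. (F has_real_derivative D) (at_left h))"

definition right_deriv :: "(real \<Rightarrow> real) \<Rightarrow> real \<Rightarrow> real" where
  "right_deriv F h = (THE D. (F has_real_derivative D) (at_right h))"

definition multiplicity_at :: "(real \<Rightarrow> real) \<Rightarrow> real \<Rightarrow> real" where
  "multiplicity_at F h = left_deriv F h - right_deriv F h"

definition G_inf :: "real \<Rightarrow> real \<Rightarrow> real set \<Rightarrow> real \<Rightarrow> real" where
  "G_inf \<alpha> \<beta> P z =
     (if z \<in> {\<alpha>..\<beta>} then
        (INF G \<in> {G. tropical_series \<alpha> \<beta> G \<and> P \<subseteq> nonsmooth_points \<alpha> \<beta> G}. G z)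
      else 0)"

end

theory Submission
  imports Defs
begin

text \<open>The minimal series is the broken line \<open>F z = s z - ramp q z - (\<Sum>p\<in>P. ramp p z)\<close>, where
  \<open>ramp p z = max 0 (z - p)\<close> and the integer \<open>s\<close> is forced by \<open>F 1 = 0\<close>; this is what makes
  \<open>q = frac (- \<Sum>P)\<close>. It is a tropical series whose non-smooth points in
  \<open>(0, 1)\<close> are those of \<open>P\<close> and \<open>q\<close> (when \<open>q \<noteq> 0\<close>), each with multiplicity the number of
  ramps placed there.

  For minimality let \<open>G\<close> be a tropical series non-smooth on \<open>P\<close>. Locally \<open>G\<close> is a minimum of finitely
  many affine functions with integer slopes, so it has integer supergradients, and at every
  \<open>p \<in> P\<close> two of them differ by at least one. Hence adding a ramp at each \<open>p\<close> keeps all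
  supergradients integral, and \<open>K = G + (\<Sum>p\<in>P. ramp p)\<close> has \<open>K 0 = 0\<close> and \<open>K 1 = s - 1 + q\<close>.
  An integer supergradient \<open>\<sigma>\<close> at \<open>x\<close> then gives \<open>K x \<ge> s x\<close> if \<open>\<sigma> \<ge> s\<close> and \<open>K x \<ge> (s - 1) x + q\<close>
  otherwise; in both cases \<open>K x \<ge> s x - ramp q x\<close>, i.e. \<open>G \<ge> F\<close>.\<close>

definition ramp :: "real \<Rightarrow> real \<Rightarrow> real" where
  "ramp p z = max 0 (z - p)"

definition supergradient :: "real set \<Rightarrow> (real \<Rightarrow> real) \<Rightarrow> real \<Rightarrow> real \<Rightarrow> bool" where
  "supergradient S K x \<sigma> \<longleftrightarrow> (\<forall>y\<in>S. K y \<le> K x + \<sigma> * (y - x))"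

definition has_kink :: "real set \<Rightarrow> (real \<Rightarrow> real) \<Rightarrow> real \<Rightarrow> bool" where
  "has_kink S K p \<longleftrightarrow>
     (\<exists>s t :: int. t < s \<and> supergradient S K p (of_int s) \<and> supergradient S K p (of_int t))"

lemma supergradient_antimono:
  assumes "supergradient S K x \<sigma>" "supergradient S K y \<tau>" "x < y" "x \<in> S" "y \<in> S"
  shows "\<tau> \<le> \<sigma>"
proof -
  have "K y \<le> K x + \<sigma> * (y - x)" "K x \<le> K y + \<tau> * (x - y)"
    using assms unfolding supergradient_def by auto
  then have "\<tau> * (y - x) \<le> \<sigma> * (y - x)" by (simp add: algebra_simps)
  with \<open>x < y\<close> show ?thesis by simp
qed

text \<open>A slope drop of at least one at \<open>p\<close> absorbs the unit slope that the ramp adds to the right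
  of \<open>p\<close>, so supergradients survive the addition of the ramp.\<close>
lemma supergradient_add_ramp_before:
  assumes x: "supergradient S K x \<sigma>" and s: "supergradient S K p s" and t: "supergradient S K p t"
    and "t + 1 \<le> s" "x < p" "x \<in> S" "p \<in> S"
  shows "supergradient S (\<lambda>y. K y + ramp p y) x \<sigma>"
  unfolding supergradient_def
proof
  fix y assume "y \<in> S"
  have "s \<le> \<sigma>" using supergradient_antimono[OF x s] assms by blast
  have "K p \<le> K x + \<sigma> * (p - x)" using x \<open>p \<in> S\<close> by (auto simp: supergradient_def)
  show "K y + ramp p y \<le> K x + ramp p x + \<sigma> * (y - x)"
  proof (cases "y \<le> p")
    case True
    then show ?thesis using x \<open>y \<in> S\<close> \<open>x < p\<close> by (auto simp: supergradient_def ramp_def)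
  next
    case False
    have "K y \<le> K p + t * (y - p)" using t \<open>y \<in> S\<close> by (auto simp: supergradient_def)
    moreover have "(t + 1) * (y - p) \<le> \<sigma> * (y - p)"
      using False \<open>t + 1 \<le> s\<close> \<open>s \<le> \<sigma>\<close> by (intro mult_right_mono) auto
    ultimately show ?thesis using \<open>K p \<le> K x + \<sigma> * (p - x)\<close> False \<open>x < p\<close>
      by (auto simp: ramp_def algebra_simps)
  qed
qed

lemma supergradient_add_ramp_after:
  assumes x: "supergradient S K x \<sigma>" and s: "supergradient S K p s" and t: "supergradient S K p t"
    and "t + 1 \<le> s" "p < x" "x \<in> S" "p \<in> S"
  shows "supergradient S (\<lambda>y. K y + ramp p y) x (\<sigma> + 1)"
  unfolding supergradient_def
proof
  fix y assume "y \<in> S"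
  have "\<sigma> \<le> t" using supergradient_antimono[OF t x] assms by blast
  have "K p \<le> K x + \<sigma> * (p - x)" using x \<open>p \<in> S\<close> by (auto simp: supergradient_def)
  show "K y + ramp p y \<le> K x + ramp p x + (\<sigma> + 1) * (y - x)"
  proof (cases "y \<le> p")
    case False
    then show ?thesis using x \<open>y \<in> S\<close> \<open>p < x\<close> by (auto simp: supergradient_def ramp_def algebra_simps)
  next
    case True
    have "K y \<le> K p + s * (y - p)" using s \<open>y \<in> S\<close> by (auto simp: supergradient_def)
    moreover have "s * (y - p) \<le> (\<sigma> + 1) * (y - p)"
      using True \<open>t + 1 \<le> s\<close> \<open>\<sigma> \<le> t\<close> by (intro mult_right_mono_neg) auto
    ultimately show ?thesis using \<open>K p \<le> K x + \<sigma> * (p - x)\<close> True \<open>p < x\<close>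
      by (auto simp: ramp_def algebra_simps)
  qed
qed

lemma supergradient_add_ramp_at:
  assumes s: "supergradient S K p s" and t: "supergradient S K p t" and "t + 1 \<le> s"
  shows "supergradient S (\<lambda>y. K y + ramp p y) p (t + 1)"
  unfolding supergradient_def
proof
  fix y assume "y \<in> S"
  show "K y + ramp p y \<le> K p + ramp p p + (t + 1) * (y - p)"
  proof (cases "y \<le> p")
    case False
    then show ?thesis using t \<open>y \<in> S\<close> by (auto simp: supergradient_def ramp_def algebra_simps)
  next
    case True
    have "K y \<le> K p + s * (y - p)" using s \<open>y \<in> S\<close> by (auto simp: supergradient_def)
    moreover have "s * (y - p) \<le> (t + 1) * (y - p)"
      using True \<open>t + 1 \<le> s\<close> by (intro mult_right_mono_neg) auto
    ultimately show ?thesis using True by (auto simp: ramp_def algebra_simps)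
  qed
qed

lemma has_kink_add_ramp:
  assumes "has_kink S K x" "has_kink S K p" "x \<noteq> p" "x \<in> S" "p \<in> S"
  shows "has_kink S (\<lambda>y. K y + ramp p y) x"
proof -
  obtain s t :: int where st: "t < s" "supergradient S K p s" "supergradient S K p t"
    using assms(2) by (auto simp: has_kink_def)
  obtain s' t' :: int where st': "t' < s'" "supergradient S K x s'" "supergradient S K x t'"
    using assms(1) by (auto simp: has_kink_def)
  have "real_of_int t + 1 \<le> of_int s" using st(1) by linarith
  note before = supergradient_add_ramp_before[OF _ st(2,3) this]
    and after = supergradient_add_ramp_after[OF _ st(2,3) this]
  consider "x < p" | "p < x" using \<open>x \<noteq> p\<close> by linarith
  then show ?thesis
  proof cases
    case 1
    then show ?thesis
      using before[OF st'(2)] before[OF st'(3)] st'(1) assms by (auto simp: has_kink_def)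
  next
    case 2
    then show ?thesis
      using after[OF st'(2)] after[OF st'(3)] st'(1) assms unfolding has_kink_def
      by (intro exI[of _ "s' + 1"] exI[of _ "t' + 1"]) auto
  qed
qed

lemma int_supergradient_add_ramp:
  assumes "supergradient S K x (of_int \<sigma>)" "has_kink S K p" "x \<in> S" "p \<in> S"
  shows "\<exists>\<tau>::int. supergradient S (\<lambda>y. K y + ramp p y) x \<tau>"
proof -
  obtain s t :: int where st: "t < s" "supergradient S K p s" "supergradient S K p t"
    using assms(2) by (auto simp: has_kink_def)
  have ts: "real_of_int t + 1 \<le> of_int s" using st(1) by linarith
  consider "x < p" | "x = p" | "p < x" by linarith
  then show ?thesis
  proof cases
    case 1
    then show ?thesis using supergradient_add_ramp_before[OF assms(1) st(2,3) ts] assms by blast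
  next
    case 2
    then show ?thesis using supergradient_add_ramp_at[OF st(2,3)] st(1)
      by (intro exI[of _ "t + 1"]) auto
  next
    case 3
    then show ?thesis using supergradient_add_ramp_after[OF assms(1) st(2,3) ts] assms
      by (intro exI[of _ "\<sigma> + 1"]) auto
  qed
qed

lemma int_supergradients_add_ramps:
  assumes "finite A" "A \<subseteq> S" "X \<subseteq> S"
    and "\<forall>x\<in>X. \<exists>\<sigma>::int. supergradient S K x \<sigma>" "\<forall>p\<in>A. has_kink S K p"
  shows "\<forall>x\<in>X. \<exists>\<sigma>::int. supergradient S (\<lambda>y. K y + (\<Sum>p\<in>A. ramp p y)) x \<sigma>"
proof -
  have "(\<forall>x\<in>X. \<exists>\<sigma>::int. supergradient S (\<lambda>y. K y + (\<Sum>p\<in>B. ramp p y)) x \<sigma>) \<and>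
        (\<forall>p\<in>A - B. has_kink S (\<lambda>y. K y + (\<Sum>p\<in>B. ramp p y)) p)" if "B \<subseteq> A" for B
    using finite_subset[OF that \<open>finite A\<close>] that
  proof (induction B rule: finite_subset_induct')
    case empty
    then show ?case using assms by simp
  next
    case (insert b B)
    let ?K = "\<lambda>y. K y + (\<Sum>p\<in>B. ramp p y)"
    have K: "(\<lambda>y. K y + (\<Sum>p\<in>insert b B. ramp p y)) = (\<lambda>y. ?K y + ramp b y)"
      using insert by (simp add: algebra_simps)
    have b: "has_kink S ?K b" "b \<in> S" using insert assms by auto
    show ?case unfolding K
    proof (intro conjI ballI)
      fix x assume "x \<in> X"
      then obtain \<sigma> :: int where "supergradient S ?K x \<sigma>" using insert.IH by blast
      then show "\<exists>\<tau>::int. supergradient S (\<lambda>y. ?K y + ramp b y) x \<tau>"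
        using int_supergradient_add_ramp[OF _ b(1) _ b(2)] \<open>x \<in> X\<close> assms(3) by blast
    next
      fix p assume "p \<in> A - insert b B"
      then show "has_kink S (\<lambda>y. ?K y + ramp b y) p"
        using insert assms b by (auto intro!: has_kink_add_ramp)
    qed
  qed
  then show ?thesis by blast
qed

lemma tropical_seriesE:
  assumes "tropical_series \<alpha> \<beta> G"
  obtains a :: "int \<Rightarrow> real" where "G \<alpha> = 0" "G \<beta> = 0"
    and "\<And>z v. z \<in> {\<alpha>..\<beta>} \<Longrightarrow> G z \<le> a v + z * of_int v"
    and "\<And>z y. z \<in> {\<alpha>..\<beta>} \<Longrightarrow> \<forall>v. y \<le> a v + z * of_int v \<Longrightarrow> y \<le> G z"
proof -
  obtain a :: "int \<Rightarrow> real" where "\<forall>z\<in>{\<alpha>..\<beta>}. (\<forall>v. G z \<le> a v + z * of_int v) \<and>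
      (\<forall>y. (\<forall>v. y \<le> a v + z * of_int v) \<longrightarrow> y \<le> G z)"
    using assms unfolding tropical_series_def by blast
  then show thesis using assms unfolding tropical_series_def by (intro that[of a]) auto
qed

lemma active_index_supergradient:
  assumes "\<And>z. z \<in> S \<Longrightarrow> G z \<le> a v + z * of_int v" and "a v + x * of_int v = G x"
  shows "supergradient S G x (of_int v)"
  unfolding supergradient_def
proof
  fix y assume "y \<in> S"
  then have "G y \<le> a v + y * of_int v" by (rule assms(1))
  also have "\<dots> = G x + of_int v * (y - x)" using assms(2) by (simp add: algebra_simps)
  finally show "G y \<le> G x + of_int v * (y - x)" .
qed

lemma finite_int_scaled_abs_le:
  fixes \<eta> c :: real
  assumes "0 < \<eta>"
  shows "finite {v::int. \<eta> * \<bar>of_int v\<bar> \<le> c}"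
proof (rule finite_subset)
  show "{v::int. \<eta> * \<bar>of_int v\<bar> \<le> c} \<subseteq> {-\<lceil>c / \<eta>\<rceil>..\<lceil>c / \<eta>\<rceil>}"
  proof
    fix v assume "v \<in> {v::int. \<eta> * \<bar>of_int v\<bar> \<le> c}"
    then have "\<bar>of_int v\<bar> \<le> c / \<eta>" using assms by (simp add: pos_le_divide_eq mult.commute)
    then have "\<bar>v\<bar> \<le> \<lceil>c / \<eta>\<rceil>" by (metis ceiling_mono ceiling_of_int of_int_abs)
    then show "v \<in> {-\<lceil>c / \<eta>\<rceil>..\<lceil>c / \<eta>\<rceil>}" by auto
  qed
qed simp

text \<open>Away from the endpoints only finitely many coefficients can be active: a term with
  \<open>\<eta> * \<bar>v\<bar> > a 0\<close> exceeds the term \<open>a 0\<close>, which bounds \<open>G\<close> from above.\<close>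
lemma tropical_active_index_bounded:
  fixes a :: "int \<Rightarrow> real"
  assumes "G \<alpha> = 0" "G \<beta> = 0"
    and lb: "\<And>z v. z \<in> {\<alpha>..\<beta>} \<Longrightarrow> G z \<le> a v + z * of_int v"
    and glb: "\<And>z y. z \<in> {\<alpha>..\<beta>} \<Longrightarrow> \<forall>v. y \<le> a v + z * of_int v \<Longrightarrow> y \<le> G z"
    and "0 < \<eta>" and y: "y \<in> {\<alpha> + \<eta>..\<beta> - \<eta>}"
  shows "\<exists>v. \<eta> * \<bar>of_int v\<bar> \<le> a 0 \<and> G y = a v + y * of_int v"
proof -
  define V where "V = {v::int. \<eta> * \<bar>of_int v\<bar> \<le> a 0}"
  have "a v + \<alpha> * of_int v \<ge> 0" "a v + \<beta> * of_int v \<ge> 0" for v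
    using lb[of \<alpha> v] lb[of \<beta> v] assms by auto
  then have large: "a v + y * of_int v \<ge> \<eta> * \<bar>of_int v\<bar>" for v
  proof (cases "v \<ge> 0")
    case True
    have "\<eta> * of_int v \<le> (y - \<alpha>) * of_int v" using y True by (intro mult_right_mono) auto
    then show ?thesis using True \<open>a v + \<alpha> * of_int v \<ge> 0\<close> by (simp add: algebra_simps)
  next
    case False
    have "\<eta> * - of_int v \<le> (\<beta> - y) * - of_int v" using y False by (intro mult_right_mono) auto
    then show ?thesis using False \<open>a v + \<beta> * of_int v \<ge> 0\<close> by (simp add: algebra_simps)
  qed
  have fin: "finite ((\<lambda>v. a v + y * of_int v) ` V)"
    unfolding V_def using finite_int_scaled_abs_le[OF \<open>0 < \<eta>\<close>] by blast
  have "0 \<in> V" using large[of 0] by (simp add: V_def)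
  define m where "m = Min ((\<lambda>v. a v + y * of_int v) ` V)"
  have m_le: "m \<le> a v + y * of_int v" for v
  proof (cases "v \<in> V")
    case True
    then show ?thesis using fin by (simp add: m_def)
  next
    case False
    then have "a 0 < a v + y * of_int v" using large[of v] by (simp add: V_def)
    moreover have "m \<le> a 0 + y * of_int 0" unfolding m_def using fin \<open>0 \<in> V\<close> by (intro Min_le) (auto intro!: image_eqI[of _ _ 0])
    ultimately show ?thesis by simp
  qed
  have "m \<in> (\<lambda>v. a v + y * of_int v) ` V" using fin \<open>0 \<in> V\<close> unfolding m_def by (intro Min_in) auto
  then obtain v where "v \<in> V" "m = a v + y * of_int v" by blast
  moreover have "y \<in> {\<alpha>..\<beta>}" using y \<open>0 < \<eta>\<close> by auto
  then have "G y = m" using lb glb m_le \<open>m = a v + y * of_int v\<close> by (metis antisym)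
  ultimately show ?thesis by (auto simp: V_def)
qed

lemma tropical_series_int_supergradient:
  assumes "tropical_series \<alpha> \<beta> G" "x \<in> {\<alpha><..<\<beta>}"
  shows "\<exists>\<sigma>::int. supergradient {\<alpha>..\<beta>} G x \<sigma>"
proof -
  obtain a where G: "G \<alpha> = 0" "G \<beta> = 0"
    and lb: "\<And>z v. z \<in> {\<alpha>..\<beta>} \<Longrightarrow> G z \<le> a v + z * of_int v"
    and glb: "\<And>z y. z \<in> {\<alpha>..\<beta>} \<Longrightarrow> \<forall>v. y \<le> a v + z * of_int v \<Longrightarrow> y \<le> G z"
    using assms(1) by (rule tropical_seriesE) blast
  have "0 < min (x - \<alpha>) (\<beta> - x)" "x \<in> {\<alpha> + min (x - \<alpha>) (\<beta> - x)..\<beta> - min (x - \<alpha>) (\<beta> - x)}"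
    using assms(2) by auto
  then obtain v where "G x = a v + x * of_int v"
    using tropical_active_index_bounded[OF G lb glb] by blast
  then have "supergradient {\<alpha>..\<beta>} G x (of_int v)" by (intro active_index_supergradient) (auto intro: lb)
  then show ?thesis by blast
qed

lemma tropical_eventually_affine_if_unique_active:
  fixes a :: "int \<Rightarrow> real"
  assumes G: "G \<alpha> = 0" "G \<beta> = 0"
    and lb: "\<And>z v. z \<in> {\<alpha>..\<beta>} \<Longrightarrow> G z \<le> a v + z * of_int v"
    and glb: "\<And>z y. z \<in> {\<alpha>..\<beta>} \<Longrightarrow> \<forall>v. y \<le> a v + z * of_int v \<Longrightarrow> y \<le> G z"
    and x: "x \<in> {\<alpha><..<\<beta>}" and s: "G x = a s + x * of_int s"
    and unique: "\<And>w. G x = a w + x * of_int w \<Longrightarrow> w = s"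
  shows "\<forall>\<^sub>F y in nhds x. G y = a s + y * of_int s"
proof -
  define \<eta> where "\<eta> = min (x - \<alpha>) (\<beta> - x) / 2"
  have "0 < \<eta>" "\<eta> < x - \<alpha>" "\<eta> < \<beta> - x" using x by (auto simp: \<eta>_def)
  define V where "V = {v::int. \<eta> * \<bar>of_int v\<bar> \<le> a 0}"
  have "\<forall>\<^sub>F y in nhds x. \<forall>w\<in>V - {s}. a s + y * of_int s < a w + y * of_int w"
  proof (rule eventually_ball_finite)
    show "finite (V - {s})" unfolding V_def using finite_int_scaled_abs_le[OF \<open>0 < \<eta>\<close>] by blast
    show "\<forall>w\<in>V - {s}. \<forall>\<^sub>F y in nhds x. a s + y * of_int s < a w + y * of_int w"
    proof
      fix w assume "w \<in> V - {s}"
      then have "G x \<noteq> a w + x * of_int w" using unique by blast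
      moreover have "G x \<le> a w + x * of_int w" using lb x by simp
      ultimately have "0 < a w + x * of_int w - (a s + x * of_int s)" using s by linarith
      moreover have "((\<lambda>y. a w + y * of_int w - (a s + y * of_int s))
          \<longlongrightarrow> a w + x * of_int w - (a s + x * of_int s)) (nhds x)"
        by (intro tendsto_intros) (rule filterlim_ident)+
      ultimately have "\<forall>\<^sub>F y in nhds x. 0 < a w + y * of_int w - (a s + y * of_int s)"
        by (rule order_tendstoD(1)[rotated])
      then show "\<forall>\<^sub>F y in nhds x. a s + y * of_int s < a w + y * of_int w"
        by (rule eventually_mono) simp
    qed
  qed
  moreover have "\<forall>\<^sub>F y in nhds x. y \<in> {\<alpha> + \<eta><..<\<beta> - \<eta>}"
    using \<open>\<eta> < x - \<alpha>\<close> \<open>\<eta> < \<beta> - x\<close> by (intro eventually_nhds_in_open) auto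
  ultimately show ?thesis
  proof eventually_elim
    case (elim y)
    then have "y \<in> {\<alpha> + \<eta>..\<beta> - \<eta>}" by simp
    then obtain v where v: "v \<in> V" "G y = a v + y * of_int v"
      using tropical_active_index_bounded[OF G lb glb \<open>0 < \<eta>\<close>] unfolding V_def by blast
    have "G y \<le> a s + y * of_int s" using lb \<open>y \<in> {\<alpha> + \<eta>..\<beta> - \<eta>}\<close> \<open>0 < \<eta>\<close> by simp
    have "v = s"
    proof (rule ccontr)
      assume "v \<noteq> s"
      then have "a s + y * of_int s < a v + y * of_int v" using elim(1) v(1) by blast
      then show False using v(2) \<open>G y \<le> a s + y * of_int s\<close> by linarith
    qed
    with v show ?case by simp
  qed
qed

text \<open>At a non-smooth point two coefficients are active; otherwise \<open>G\<close> would be affine nearby.\<close>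
lemma tropical_series_nonsmooth_has_kink:
  assumes "tropical_series \<alpha> \<beta> G" "x \<in> nonsmooth_points \<alpha> \<beta> G"
  shows "has_kink {\<alpha>..\<beta>} G x"
proof -
  obtain a where G: "G \<alpha> = 0" "G \<beta> = 0"
    and lb: "\<And>z v. z \<in> {\<alpha>..\<beta>} \<Longrightarrow> G z \<le> a v + z * of_int v"
    and glb: "\<And>z y. z \<in> {\<alpha>..\<beta>} \<Longrightarrow> \<forall>v. y \<le> a v + z * of_int v \<Longrightarrow> y \<le> G z"
    using assms(1) by (rule tropical_seriesE) blast
  have x: "x \<in> {\<alpha><..<\<beta>}" and nd: "\<not> G differentiable (at x)"
    using assms(2) by (auto simp: nonsmooth_points_def)
  have "0 < min (x - \<alpha>) (\<beta> - x)" "x \<in> {\<alpha> + min (x - \<alpha>) (\<beta> - x)..\<beta> - min (x - \<alpha>) (\<beta> - x)}"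
    using x by auto
  then obtain s where s: "G x = a s + x * of_int s"
    using tropical_active_index_bounded[OF G lb glb] by blast
  have "\<exists>w. w \<noteq> s \<and> G x = a w + x * of_int w"
  proof (rule ccontr)
    assume "\<nexists>w. w \<noteq> s \<and> G x = a w + x * of_int w"
    then have affine: "\<forall>\<^sub>F y in nhds x. G y = a s + y * of_int s"
      using tropical_eventually_affine_if_unique_active[OF G lb glb x s] by blast
    have "((\<lambda>y. a s + y * of_int s) has_real_derivative of_int s) (at x)"
      by (auto intro!: derivative_eq_intros)
    then have "(G has_real_derivative of_int s) (at x)"
      by (subst DERIV_cong_ev[OF refl affine refl])
    then show False using nd real_differentiable_def by blast
  qed
  then obtain w where w: "w \<noteq> s" "G x = a w + x * of_int w" by blast
  have "supergradient {\<alpha>..\<beta>} G x (of_int v)" if "G x = a v + x * of_int v" for v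
    using that by (intro active_index_supergradient) (auto intro: lb)
  then show ?thesis using s w unfolding has_kink_def by (metis linorder_neqE)
qed

lemma int_supergradients_ge_line_minus_ramp:
  fixes s :: int and q x :: real
  assumes "K 0 = 0" "K 1 = of_int s - 1 + q"
    and "\<forall>x\<in>{0<..<1}. \<exists>\<sigma>::int. supergradient {0..1} K x \<sigma>" and "x \<in> {0..1}"
  shows "s * x - ramp q x \<le> K x"
proof -
  have "0 \<le> ramp q x" "x - q \<le> ramp q x" by (auto simp: ramp_def)
  consider "x = 0" | "x = 1" | "x \<in> {0<..<1}" using \<open>x \<in> {0..1}\<close> by fastforce
  then show ?thesis
  proof cases
    case 3
    then obtain \<sigma> :: int where "supergradient {0..1} K x \<sigma>" using assms(3) by blast
    then have sg: "K y \<le> K x + \<sigma> * (y - x)" if "y \<in> {0..1}" for y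
      using that by (auto simp: supergradient_def)
    have "K 0 \<le> K x + \<sigma> * (0 - x)" and right: "K 1 \<le> K x + \<sigma> * (1 - x)"
      by (rule sg; simp)+
    then have left: "\<sigma> * x \<le> K x" using assms(1) by simp
    show ?thesis
    proof (cases "s \<le> \<sigma>")
      case True
      then have "s * x \<le> \<sigma> * x" using 3 by (intro mult_right_mono) auto
      then show ?thesis using left \<open>0 \<le> ramp q x\<close> by linarith
    next
      case False
      then have "\<sigma> * (1 - x) \<le> (s - 1) * (1 - x)" using 3 by (intro mult_right_mono) auto
      then show ?thesis using right assms(2) \<open>x - q \<le> ramp q x\<close> by (simp add: algebra_simps)
    qed
  qed (use assms \<open>0 \<le> ramp q x\<close> \<open>x - q \<le> ramp q x\<close> in auto)
qed

text \<open>For \<open>q = 0\<close> the ramp at \<open>q\<close> is the identity on \<open>[0, 1]\<close> and only shifts the slope \<open>s\<close>;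
  for \<open>q \<in> P\<close> the point \<open>q\<close> carries two ramps.\<close>
definition broken_line :: "int \<Rightarrow> real \<Rightarrow> real set \<Rightarrow> real \<Rightarrow> real" where
  "broken_line s q P z = of_int s * z - ramp q z - (\<Sum>p\<in>P. ramp p z)"

lemma tropical_series_ge_broken_line:
  fixes s :: int and q :: real
  assumes "tropical_series 0 1 G" "finite P" "P \<subseteq> nonsmooth_points 0 1 G"
    and "(\<Sum>p\<in>P. 1 - p) = of_int s - 1 + q" and "z \<in> {0..1}"
  shows "broken_line s q P z \<le> G z"
proof -
  have P: "P \<subseteq> {0<..<1}" using assms(3) by (auto simp: nonsmooth_points_def)
  define K where "K y = G y + (\<Sum>p\<in>P. ramp p y)" for y
  have K: "\<forall>x\<in>{0<..<1}. \<exists>\<sigma>::int. supergradient {0..1} K x \<sigma>"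
    unfolding K_def using assms(1,2,3) P
    by (intro int_supergradients_add_ramps)
      (auto intro: tropical_series_int_supergradient tropical_series_nonsmooth_has_kink)
  have "(\<Sum>p\<in>P. ramp p 0) = 0" "(\<Sum>p\<in>P. ramp p 1) = (\<Sum>p\<in>P. 1 - p)"
    using P by (auto simp: ramp_def intro!: sum.neutral sum.cong)
  then have "K 0 = 0" "K 1 = of_int s - 1 + q"
    using assms(1,4) by (auto simp: K_def tropical_series_def)
  then have "s * z - ramp q z \<le> K z"
    using K assms(5) by (rule int_supergradients_ge_line_minus_ramp)
  then show ?thesis by (simp add: K_def broken_line_def)
qed

lemma supergradient_nonneg_if_zero_at_ends:
  assumes "supergradient {\<alpha>..\<beta>} F z \<sigma>" "z \<in> {\<alpha>..\<beta>}" "F \<alpha> = 0" "F \<beta> = 0"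
  shows "0 \<le> F z"
proof -
  have "F \<alpha> \<le> F z + \<sigma> * (\<alpha> - z)" "F \<beta> \<le> F z + \<sigma> * (\<beta> - z)"
    using assms(1,2) unfolding supergradient_def by auto
  moreover have "0 \<le> \<sigma> * (z - \<alpha>) \<or> 0 \<le> \<sigma> * (z - \<beta>)"
    using assms(2) by (cases "\<sigma> \<ge> 0") (simp_all add: mult_nonpos_nonpos)
  ultimately show ?thesis using assms(3,4) by (simp add: right_diff_distrib) linarith
qed

text \<open>The coefficients are given by the Legendre transform \<open>a v = sup (F y - y v)\<close>; an integer
  supergradient at \<open>z\<close> is exactly an index attaining the infimum at \<open>z\<close>.\<close>
lemma tropical_series_of_int_supergradients:
  assumes "\<alpha> \<le> \<beta>" "F \<alpha> = 0" "F \<beta> = 0"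
    and sg: "\<forall>z\<in>{\<alpha>..\<beta>}. \<exists>\<sigma>::int. supergradient {\<alpha>..\<beta>} F z \<sigma>"
  shows "tropical_series \<alpha> \<beta> F"
proof -
  have "\<alpha> \<in> {\<alpha>..\<beta>}" using assms(1) by simp
  define a where "a v = (SUP y\<in>{\<alpha>..\<beta>}. F y - y * of_int v)" for v :: int
  have bdd: "bdd_above ((\<lambda>y. F y - y * of_int v) ` {\<alpha>..\<beta>})" for v
  proof -
    obtain \<sigma> :: int where \<sigma>: "supergradient {\<alpha>..\<beta>} F \<alpha> \<sigma>" using sg \<open>\<alpha> \<in> {\<alpha>..\<beta>}\<close> by blast
    have "bounded ((\<lambda>y. F \<alpha> + \<sigma> * (y - \<alpha>) - y * of_int v) ` {\<alpha>..\<beta>})"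
      by (intro compact_imp_bounded compact_continuous_image continuous_intros) auto
    then obtain M where "\<forall>y\<in>{\<alpha>..\<beta>}. F \<alpha> + \<sigma> * (y - \<alpha>) - y * of_int v \<le> M"
      by (auto dest!: bounded_imp_bdd_above simp: bdd_above_def)
    moreover have "F y - y * of_int v \<le> F \<alpha> + \<sigma> * (y - \<alpha>) - y * of_int v" if "y \<in> {\<alpha>..\<beta>}" for y
      using \<sigma> that unfolding supergradient_def by simp
    ultimately have "F y - y * of_int v \<le> M" if "y \<in> {\<alpha>..\<beta>}" for y
      using that by (meson order_trans)
    then show ?thesis by (rule bdd_aboveI2)
  qed
  have "(\<forall>v. F z \<le> a v + z * of_int v) \<and> (\<forall>y. (\<forall>v. y \<le> a v + z * of_int v) \<longrightarrow> y \<le> F z)"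
    if z: "z \<in> {\<alpha>..\<beta>}" for z
  proof (intro conjI allI impI)
    fix v :: int
    have "F z - z * of_int v \<le> a v" unfolding a_def using bdd z by (intro cSUP_upper)
    then show "F z \<le> a v + z * of_int v" by simp
  next
    fix y assume y: "\<forall>v. y \<le> a v + z * of_int v"
    obtain \<sigma> :: int where "supergradient {\<alpha>..\<beta>} F z \<sigma>" using sg z by blast
    then have "a \<sigma> \<le> F z - z * of_int \<sigma>"
      unfolding a_def supergradient_def using assms(1)
      by (intro cSUP_least) (auto simp: algebra_simps)
    then show "y \<le> F z" using y[rule_format, of \<sigma>] by simp
  qed
  then show ?thesis
    unfolding tropical_series_def using assms supergradient_nonneg_if_zero_at_ends by blast
qed

lemma ramp_supergradient_ineq: "ramp p z + of_bool (p \<le> z) * (y - z) \<le> ramp p y"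
  by (auto simp: ramp_def)

lemma broken_line_supergradient:
  "supergradient S (broken_line s q P) z (of_int (s - of_bool (q \<le> z) - (\<Sum>p\<in>P. of_bool (p \<le> z))))"
  unfolding supergradient_def
proof
  fix y
  have "(\<Sum>p\<in>P. ramp p z + of_bool (p \<le> z) * (y - z)) \<le> (\<Sum>p\<in>P. ramp p y)"
    by (intro sum_mono ramp_supergradient_ineq)
  then have "(\<Sum>p\<in>P. ramp p z) + (\<Sum>p\<in>P. of_bool (p \<le> z)) * (y - z) \<le> (\<Sum>p\<in>P. ramp p y)"
    by (simp add: sum.distrib sum_distrib_right)
  then show "broken_line s q P y \<le> broken_line s q P z
      + of_int (s - of_bool (q \<le> z) - (\<Sum>p\<in>P. of_bool (p \<le> z))) * (y - z)"
    using ramp_supergradient_ineq[of q z y] by (simp add: broken_line_def algebra_simps)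
qed

lemma tropical_series_broken_line:
  fixes s :: int and q :: real
  assumes "P \<subseteq> {0<..<1}" "0 \<le> q" "q < 1" "(\<Sum>p\<in>P. 1 - p) = of_int s - 1 + q"
  shows "tropical_series 0 1 (broken_line s q P)"
proof (rule tropical_series_of_int_supergradients)
  have "(\<Sum>p\<in>P. ramp p 0) = 0" "(\<Sum>p\<in>P. ramp p 1) = (\<Sum>p\<in>P. 1 - p)"
    using assms(1) by (auto simp: ramp_def intro!: sum.neutral sum.cong)
  moreover have "ramp q 0 = 0" "ramp q 1 = 1 - q" using assms(2,3) by (auto simp: ramp_def)
  ultimately show "broken_line s q P 0 = 0" "broken_line s q P 1 = 0"
    using assms(4) unfolding broken_line_def by simp_all
  show "\<forall>z\<in>{0..1}. \<exists>\<sigma>::int. supergradient {0..1} (broken_line s q P) z \<sigma>"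
    by (intro ballI exI) (rule broken_line_supergradient)
qed simp

lemma ramp_has_left_derivative: "(ramp p has_real_derivative of_bool (p < h)) (at_left h)"
proof (cases "p < h")
  case True
  have "\<forall>\<^sub>F z in at_left h. ramp p z = z - p"
    using eventually_at_left_real[OF True] by (rule eventually_mono) (simp add: ramp_def)
  moreover have "ramp p h = h - p" using True by (simp add: ramp_def)
  moreover have "((\<lambda>z. z - p) has_real_derivative 1) (at_left h)"
    by (auto intro!: derivative_eq_intros)
  ultimately show ?thesis using True by (simp add: has_field_derivative_cong_eventually)
next
  case False
  have "\<forall>\<^sub>F z in at_left h. ramp p z = 0"
    using eventually_at_left_real[of "h - 1" h] False by (auto simp: ramp_def elim: eventually_mono)
  moreover have "ramp p h = 0" using False by (simp add: ramp_def)
  ultimately show ?thesis using False by (simp add: has_field_derivative_cong_eventually)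
qed

lemma ramp_has_right_derivative: "(ramp p has_real_derivative of_bool (p \<le> h)) (at_right h)"
proof (cases "p \<le> h")
  case True
  have "\<forall>\<^sub>F z in at_right h. ramp p z = z - p"
    using eventually_at_right_real[of h "h + 1"] True by (auto simp: ramp_def elim: eventually_mono)
  moreover have "ramp p h = h - p" using True by (simp add: ramp_def)
  moreover have "((\<lambda>z. z - p) has_real_derivative 1) (at_right h)"
    by (auto intro!: derivative_eq_intros)
  ultimately show ?thesis using True by (simp add: has_field_derivative_cong_eventually)
next
  case False
  then have "\<forall>\<^sub>F z in at_right h. ramp p z = 0"
    using eventually_at_right_real[of h p] by (auto simp: ramp_def elim: eventually_mono)
  moreover have "ramp p h = 0" using False by (simp add: ramp_def)
  ultimately show ?thesis using False by (simp add: has_field_derivative_cong_eventually)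
qed

lemma broken_line_has_left_derivative:
  "(broken_line s q P has_real_derivative of_int s - of_bool (q < h) - (\<Sum>p\<in>P. of_bool (p < h)))
     (at_left h)"
  unfolding broken_line_def[abs_def]
  by (intro DERIV_diff DERIV_cmult_Id DERIV_sum ramp_has_left_derivative)

lemma broken_line_has_right_derivative:
  "(broken_line s q P has_real_derivative of_int s - of_bool (q \<le> h) - (\<Sum>p\<in>P. of_bool (p \<le> h)))
     (at_right h)"
  unfolding broken_line_def[abs_def]
  by (intro DERIV_diff DERIV_cmult_Id DERIV_sum ramp_has_right_derivative)

lemma left_deriv_eqI: "(f has_real_derivative D) (at_left x) \<Longrightarrow> left_deriv f x = D"
  unfolding left_deriv_def using has_field_derivative_unique trivial_limit_at_left_real by blast

lemma right_deriv_eqI: "(f has_real_derivative D) (at_right x) \<Longrightarrow> right_deriv f x = D"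
  unfolding right_deriv_def using has_field_derivative_unique trivial_limit_at_right_real by blast

lemma differentiable_at_iff_one_sided_derivatives_eq:
  fixes f :: "real \<Rightarrow> real"
  assumes L: "(f has_real_derivative L) (at_left x)" and R: "(f has_real_derivative R) (at_right x)"
  shows "f differentiable (at x) \<longleftrightarrow> L = R"
proof
  assume "f differentiable (at x)"
  then obtain D where "(f has_real_derivative D) (at x)" by (auto simp: real_differentiable_def)
  then have "(f has_real_derivative D) (at_left x)" "(f has_real_derivative D) (at_right x)"
    by (auto intro: has_field_derivative_at_within)
  with L R show "L = R"
    using has_field_derivative_unique trivial_limit_at_left_real trivial_limit_at_right_real by metis
next
  assume "L = R"
  with L R have "((\<lambda>y. (f y - f x) / (y - x)) \<longlongrightarrow> L) (at_left x)"
    "((\<lambda>y. (f y - f x) / (y - x)) \<longlongrightarrow> L) (at_right x)"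
    by (simp_all add: has_field_derivative_iff)
  then have "((\<lambda>y. (f y - f x) / (y - x)) \<longlongrightarrow> L) (at x)" by (rule filterlim_split_at)
  then show "f differentiable (at x)"
    by (auto simp: real_differentiable_def has_field_derivative_iff)
qed

lemma broken_line_slope_jump:
  fixes s :: int and q h :: real
  assumes "finite P"
  shows "(of_int s - of_bool (q < h) - (\<Sum>p\<in>P. of_bool (p < h)))
       - (of_int s - of_bool (q \<le> h) - (\<Sum>p\<in>P. of_bool (p \<le> h))) = (of_bool (h \<in> P) + of_bool (h = q) :: real)"
proof -
  have "(\<Sum>p\<in>P. of_bool (p \<le> h)) - (\<Sum>p\<in>P. of_bool (p < h))
      = (\<Sum>p\<in>P. of_bool (p \<le> h) - of_bool (p < h) :: real)"
    by (simp add: sum_subtractf)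
  also have "\<dots> = (\<Sum>p\<in>P. of_bool (p = h))" by (intro sum.cong) auto
  also have "\<dots> = of_bool (h \<in> P)" using assms by (simp add: sum.delta')
  finally show ?thesis by auto
qed

lemma agrees_with_broken_line_local_shape:
  assumes "finite P" and eq: "\<forall>z\<in>{0<..<1}. H z = broken_line s q P z" and h: "h \<in> {0<..<1}"
  shows "H differentiable (at h) \<longleftrightarrow> h \<notin> P \<and> h \<noteq> q"
    and "multiplicity_at H h = of_bool (h \<in> P) + of_bool (h = q)"
proof -
  have transfer: "(H has_real_derivative D) (at h within S)"
    if "(broken_line s q P has_real_derivative D) (at h within S)" for D S
  proof -
    have "(broken_line s q P has_derivative (*) D) (at h within S)"
      using that by (simp add: has_field_derivative_def)
    then have "(H has_derivative (*) D) (at h within S)"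
      by (rule has_derivative_transform_within_open[OF _ open_greaterThanLessThan h]) (simp add: eq)
    then show ?thesis by (simp add: has_field_derivative_def)
  qed
  note L = transfer[OF broken_line_has_left_derivative]
    and R = transfer[OF broken_line_has_right_derivative]
  show "multiplicity_at H h = of_bool (h \<in> P) + of_bool (h = q)"
    unfolding multiplicity_at_def left_deriv_eqI[OF L] right_deriv_eqI[OF R]
    using broken_line_slope_jump[OF assms(1)] .
  show "H differentiable (at h) \<longleftrightarrow> h \<notin> P \<and> h \<noteq> q"
    unfolding differentiable_at_iff_one_sided_derivatives_eq[OF L R]
    using broken_line_slope_jump[OF assms(1), of s q h] by (cases "h \<in> P") auto
qed

lemma G_inf_eqI:
  assumes "tropical_series \<alpha> \<beta> F" "P \<subseteq> nonsmooth_points \<alpha> \<beta> F"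
    and least: "\<And>G. tropical_series \<alpha> \<beta> G \<Longrightarrow> P \<subseteq> nonsmooth_points \<alpha> \<beta> G \<Longrightarrow> F z \<le> G z"
    and "z \<in> {\<alpha>..\<beta>}"
  shows "G_inf \<alpha> \<beta> P z = F z"
proof -
  let ?A = "{G. tropical_series \<alpha> \<beta> G \<and> P \<subseteq> nonsmooth_points \<alpha> \<beta> G}"
  have "F \<in> ?A" using assms(1,2) by simp
  then have "(INF G\<in>?A. G z) = F z"
    using least by (intro antisym cINF_lower cINF_greatest bdd_belowI2[of _ "F z"]) auto
  then show ?thesis using assms(4) by (simp add: G_inf_def)
qed

theorem mainTheorem5:
  fixes P :: "real set" and q :: real
  assumes "finite P" and "P \<subseteq> {0<..<1}"
    and "q = frac (- (\<Sum>p\<in>P. p))"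
  shows "(q = 0 \<longrightarrow>
           nonsmooth_points 0 1 (G_inf 0 1 P) = P \<and>
           (\<forall>h\<in>P. multiplicity_at (G_inf 0 1 P) h = 1))
       \<and> (q \<in> P \<longrightarrow>
           nonsmooth_points 0 1 (G_inf 0 1 P) = P \<and>
           multiplicity_at (G_inf 0 1 P) q = 2 \<and>
           (\<forall>h\<in>P - {q}. multiplicity_at (G_inf 0 1 P) h = 1))
       \<and> (q \<noteq> 0 \<and> q \<notin> P \<longrightarrow>
           nonsmooth_points 0 1 (G_inf 0 1 P) = insert q P \<and>
           (\<forall>h\<in>insert q P. multiplicity_at (G_inf 0 1 P) h = 1))"
proof -
  define s where "s = 1 + int (card P) + \<lfloor>- (\<Sum>p\<in>P. p)\<rfloor>"
  have q: "0 \<le> q" "q < 1" using assms(3) by (simp_all add: frac_lt_1)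
  have sum_P: "(\<Sum>p\<in>P. 1 - p) = of_int s - 1 + q"
    using assms(3) by (simp add: s_def frac_def sum_subtractf)
  let ?F = "broken_line s q P" and ?H = "G_inf 0 1 P"
  have shape_F: "?F differentiable (at h) \<longleftrightarrow> h \<notin> P \<and> h \<noteq> q" if "h \<in> {0<..<1}" for h
    using agrees_with_broken_line_local_shape(1)[OF assms(1) _ that] by blast
  have F: "tropical_series 0 1 ?F" using tropical_series_broken_line[OF assms(2) q sum_P] .
  have F_ns: "P \<subseteq> nonsmooth_points 0 1 ?F"
    using assms(2) shape_F by (auto simp: nonsmooth_points_def)
  have "?H z = ?F z" if "z \<in> {0..1}" for z
    using that by (intro G_inf_eqI[OF F F_ns] tropical_series_ge_broken_line[OF _ assms(1) _ sum_P])
  then have H: "\<forall>z\<in>{0<..<1}. ?H z = ?F z" by auto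
  have "nonsmooth_points 0 1 ?H = {h \<in> {0<..<1}. h \<in> P \<or> h = q}"
    using agrees_with_broken_line_local_shape(1)[OF assms(1) H] by (auto simp: nonsmooth_points_def)
  also have "\<dots> = P \<union> ({q} - {0})" using assms(2) q by auto
  finally have ns: "nonsmooth_points 0 1 ?H = P \<union> ({q} - {0})" .
  have mult: "multiplicity_at ?H h = of_bool (h \<in> P) + of_bool (h = q)" if "h \<in> P \<union> ({q} - {0})" for h
    using agrees_with_broken_line_local_shape(2)[OF assms(1) H] that assms(2) q by auto
  show ?thesis using ns mult assms(2) by auto
qed

end
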